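(* Let $N\ge1$, $n\ge1$, $\gamma>0$, and let channel gains $g_{S,k}>0$, $g_{k,D}>0$ ($k=1,\dots,N$) satisfy $g_{S,1}\le\cdots\le g_{S,N}$. With $C_{a,b}=\tfrac12\log(1+g_{a,b}\gamma)$ and $V_{a,b}=V(g_{a,b}\gamma)$, $V(\rho)=\frac{\rho}{2}\frac{2+\rho}{(1+\rho)^2}(\log e)^2$, define for $1\le i\le N$, $1\le j\le N$: $$a_{ij}=\sqrt{\tfrac{V_{S,i}}{V_{S,j}}},\quad b_{ij}=\sqrt{\tfrac{n}{V_{S,j}}}(C_{S,j}-C_{S,i}),\quad a_{i(N+1)}=\sqrt{\tfrac{V_{S,i}}{V_{i,D}}},\quad b_{i(N+1)}=\sqrt{\tfrac{n}{V_{i,D}}}(C_{i,D}-C_{S,i}),\quad c_i=\sqrt{V_{S,i}}.$$ Let $\varepsilon_d'\in(0,\tfrac12)$ and let $v_0$ be the optimal objective value of the problem $$\min \sum_{i=1}^N c_ix_i\quad\text{s.t.}\quad \sum_{i=1}^N\sum_{j=i}^{N+1}Q(a_{ij}x_i+b_{ij})-\varepsilon_d'=0,\quad x_i\ge0\ (i=1,\dots,N).$$ Let $x_1\in\mathbb{R}$ be the solution of $\sum_{i=1}^N\sum_{j=i}^{N+1}Q(a_{ij}x+b_{ij})-\varepsilon_d'=0$. Then $$v_1\le v_0\le v_2,\qquad v_1=Q^{-1}(\varepsilon_d')\sum_{i=1}^N c_i,\quad v_2=x_1\sum_{i=1}^N c_i.$$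
   Context: $Q(x)=\int_x^\infty\frac{1}{\sqrt{2\pi}}e^{-t^2/2}\,dt$ is the Gaussian tail function and $Q^{-1}$ its inverse. $S$ denotes the source, $D$ the destination, $1,\dots,N$ the relays, $g_{a,b}$ the channel gain of link $a\to b$, $\gamma$ the transmit SNR and $n$ the blocklength; $C_{a,b}$ and $V_{a,b}$ are the capacity and channel dispersion of the corresponding real AWGN link. *)

theory Defs
  imports "HOL-Probability.Probability"
begin

definition Qf :: "real \<Rightarrow> real" where
  "Qf x = (LBINT t:{x..}. std_normal_density t)"

definition Qinv :: "real \<Rightarrow> real" where
  "Qinv e = (THE x. Qf x = e)"

definition Cap :: "real \<Rightarrow> real" where
  "Cap \<rho> = 1/2 * log 2 (1 + \<rho>)"

definition Vdisp :: "real \<Rightarrow> real" where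
  "Vdisp \<rho> = \<rho> / 2 * ((2 + \<rho>) / (1 + \<rho>)^2) * (log 2 (exp 1))^2"

definition acoef :: "nat \<Rightarrow> real \<Rightarrow> (nat \<Rightarrow> real) \<Rightarrow> (nat \<Rightarrow> real) \<Rightarrow> nat \<Rightarrow> nat \<Rightarrow> real" where
  "acoef N \<gamma> gS gD i j =
     (if j = N + 1 then sqrt (Vdisp (gS i * \<gamma>) / Vdisp (gD i * \<gamma>))
      else sqrt (Vdisp (gS i * \<gamma>) / Vdisp (gS j * \<gamma>)))"

definition bcoef :: "nat \<Rightarrow> nat \<Rightarrow> real \<Rightarrow> (nat \<Rightarrow> real) \<Rightarrow> (nat \<Rightarrow> real) \<Rightarrow> nat \<Rightarrow> nat \<Rightarrow> real" where
  "bcoef N n \<gamma> gS gD i j =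
     (if j = N + 1 then sqrt (real n / Vdisp (gD i * \<gamma>)) * (Cap (gD i * \<gamma>) - Cap (gS i * \<gamma>))
      else sqrt (real n / Vdisp (gS j * \<gamma>)) * (Cap (gS j * \<gamma>) - Cap (gS i * \<gamma>)))"

definition ccoef :: "real \<Rightarrow> (nat \<Rightarrow> real) \<Rightarrow> nat \<Rightarrow> real" where
  "ccoef \<gamma> gS i = sqrt (Vdisp (gS i * \<gamma>))"

definition cstr :: "nat \<Rightarrow> nat \<Rightarrow> real \<Rightarrow> (nat \<Rightarrow> real) \<Rightarrow> (nat \<Rightarrow> real) \<Rightarrow> real \<Rightarrow> (nat \<Rightarrow> real) \<Rightarrow> real" where
  "cstr N n \<gamma> gS gD \<epsilon> x =
     (\<Sum>i=1..N. \<Sum>j=i..N+1. Qf (acoef N \<gamma> gS gD i j * x i + bcoef N n \<gamma> gS gD i j)) - \<epsilon>"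

definition v0 :: "nat \<Rightarrow> nat \<Rightarrow> real \<Rightarrow> (nat \<Rightarrow> real) \<Rightarrow> (nat \<Rightarrow> real) \<Rightarrow> real \<Rightarrow> real" where
  "v0 N n \<gamma> gS gD \<epsilon> =
     Inf {(\<Sum>i=1..N. ccoef \<gamma> gS i * x i) | x.
            cstr N n \<gamma> gS gD \<epsilon> x = 0 \<and> (\<forall>i\<in>{1..N}. x i \<ge> 0)}"

definition xone :: "nat \<Rightarrow> nat \<Rightarrow> real \<Rightarrow> (nat \<Rightarrow> real) \<Rightarrow> (nat \<Rightarrow> real) \<Rightarrow> real \<Rightarrow> real" where
  "xone N n \<gamma> gS gD \<epsilon> = (THE t. cstr N n \<gamma> gS gD \<epsilon> (\<lambda>_. t) = 0)"

end

theory Submission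
  imports Defs
begin

(* Every feasible x has a diagonal term Q(a_ii x_i + b_ii) = Q(x_i) in the constraint, and all
   terms are nonnegative, so Q(x_i) <= eps' and hence x_i >= Q^-1(eps'); weighting by c_i >= 0 gives
   the lower bound. Along the diagonal x_i = t the constraint sum is continuous and strictly
   decreasing in t (all slopes a_ij are positive), exceeds Q(0) = 1/2 > eps' at t = 0 and tends to 0,
   so it has a unique root x_1 >= 0; the constant vector x_1 is feasible, which gives the upper
   bound. *)

lemma set_integrable_std_normal_density:
  "A \<in> sets lborel \<Longrightarrow> set_integrable lborel A std_normal_density"
  unfolding set_integrable_def using integrable_mult_indicator[of A lborel std_normal_density]
  by simp

lemma Qf_eq_interval_integral: "Qf x = (LBINT t=ereal x..\<infinity>. std_normal_density t)"
  unfolding Qf_def interval_integral_to_infinity_eq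
  by (rule set_integral_discrete_difference[where X="{x}"]) auto

lemma Qf_eq_Qf_0_minus_interval_integral:
  "Qf x = Qf 0 - (LBINT t=ereal 0..ereal x. std_normal_density t)"
proof -
  have "(LBINT t=ereal 0..ereal x. std_normal_density t) + (LBINT t=ereal x..\<infinity>. std_normal_density t)
      = (LBINT t=ereal 0..\<infinity>. std_normal_density t)"
    by (rule interval_integral_sum)
      (simp add: interval_lebesgue_integrable_def set_integrable_std_normal_density)
  then show ?thesis
    using Qf_eq_interval_integral[of x] Qf_eq_interval_integral[of 0] by (simp add: zero_ereal_def)
qed

lemma has_real_derivative_Qf: "(Qf has_real_derivative - std_normal_density x) (at x)"
proof -
  have cont: "continuous_on UNIV std_normal_density"
    unfolding std_normal_density_def by (intro continuous_intros) auto
  have "at x within {min 0 (x - 1)..max 0 (x + 1)} = at x"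
    by (intro at_within_interior) auto
  then have "((\<lambda>u. LBINT t=ereal 0..ereal u. std_normal_density t)
      has_real_derivative std_normal_density x) (at x)"
    using interval_integral_FTC2[of "min 0 (x - 1)" 0 "max 0 (x + 1)" std_normal_density x]
      continuous_on_subset[OF cont]
    by (auto simp: has_real_derivative_iff_has_vector_derivative)
  then have "((\<lambda>u. Qf 0 - (LBINT t=ereal 0..ereal u. std_normal_density t))
      has_real_derivative - std_normal_density x) (at x)"
    by (auto intro!: derivative_eq_intros)
  then show ?thesis
    by (simp flip: Qf_eq_Qf_0_minus_interval_integral)
qed

lemma isCont_Qf: "isCont Qf x"
  using has_real_derivative_Qf by (rule DERIV_isCont)

lemma Qf_strict_decreasing:
  assumes "x < y"
  shows "Qf y < Qf x"
proof (rule DERIV_neg_imp_decreasing[OF assms])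
  show "\<exists>d. (Qf has_real_derivative d) (at t) \<and> d < 0" for t
  proof (intro exI conjI)
    show "- std_normal_density t < 0"
      using normal_density_pos[of 1 0 t] by linarith
  qed (rule has_real_derivative_Qf)
qed

lemma Qf_le_iff: "Qf x \<le> Qf y \<longleftrightarrow> y \<le> x"
  using Qf_strict_decreasing[of x y] Qf_strict_decreasing[of y x]
  by (cases x y rule: linorder_cases) auto

lemma Qf_eq_iff: "Qf x = Qf y \<longleftrightarrow> x = y"
  using Qf_strict_decreasing[of x y] Qf_strict_decreasing[of y x]
  by (cases x y rule: linorder_cases) auto

lemma Qf_nonneg: "0 \<le> Qf x"
  unfolding Qf_def set_lebesgue_integral_def
  by (rule Bochner_Integration.integral_nonneg) (simp add: indicator_def)

lemma Qf_0: "Qf 0 = 1/2"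
proof -
  have symmetric: "std_normal_density (- t) = std_normal_density t" for t
    by (simp add: std_normal_density_def)
  have "Qf 0 = (LBINT t:{..0}. std_normal_density t)"
    unfolding Qf_def by (subst set_integral_reflect) (simp add: symmetric atMost_def)
  also have "\<dots> = (LBINT t:{..<0}. std_normal_density t)"
    by (rule set_integral_discrete_difference[where X="{0}"]) auto
  finally have "2 * Qf 0 = (LBINT t:{0..}. std_normal_density t) + (LBINT t:{..<0}. std_normal_density t)"
    unfolding Qf_def by simp
  also have "\<dots> = (LBINT t:{0..} \<union> {..<0}. std_normal_density t)"
    by (rule set_integral_Un[symmetric]) (auto simp: set_integrable_std_normal_density)
  also have "{0..} \<union> {..<0} = (UNIV :: real set)"
    by auto
  finally show ?thesis
    by (simp add: set_lebesgue_integral_def)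
qed

lemma tendsto_Qf_at_top: "(Qf \<longlongrightarrow> 0) at_top"
proof -
  have "((\<lambda>b. LBINT t:{0..b}. std_normal_density t) \<longlongrightarrow> Qf 0) at_top"
    unfolding Qf_def
    by (rule tendsto_set_lebesgue_integral_at_top) (auto simp: set_integrable_std_normal_density)
  then have "((\<lambda>b. Qf 0 - (LBINT t:{0..b}. std_normal_density t)) \<longlongrightarrow> 0) at_top"
    using tendsto_diff[OF tendsto_const[of "Qf 0"]] by fastforce
  moreover have "\<forall>\<^sub>F b in at_top. Qf 0 - (LBINT t:{0..b}. std_normal_density t) = Qf b"
    using eventually_ge_at_top[of "0::real"]
    by eventually_elim
      (subst Qf_eq_Qf_0_minus_interval_integral, simp add: interval_integral_Icc zero_ereal_def)
  ultimately show ?thesis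
    by (rule Lim_transform_eventually)
qed

lemma Qf_Qinv:
  assumes "0 < e" "e \<le> 1/2"
  shows "Qf (Qinv e) = e"
proof -
  obtain b where "\<forall>t\<ge>b. Qf t < e"
    using order_tendstoD(2)[OF tendsto_Qf_at_top \<open>0 < e\<close>] by (auto simp: eventually_at_top_linorder)
  then have "Qf (max b 0) \<le> e"
    by (simp add: less_imp_le)
  then obtain x where "Qf x = e"
    using IVT2[of Qf "max b 0" e 0] assms by (auto simp: Qf_0 isCont_Qf)
  then have "Qf y = e \<longleftrightarrow> y = x" for y
    using Qf_eq_iff[of y x] by simp
  with \<open>Qf x = e\<close> show ?thesis
    by (simp add: Qinv_def)
qed

lemma tendsto_Qf_affine_at_top:
  assumes "a > 0"
  shows "((\<lambda>t. Qf (a * t + b)) \<longlongrightarrow> 0) at_top"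
proof -
  have "filterlim (\<lambda>t. b + a * t) at_top at_top"
    using assms
    by (intro filterlim_tendsto_add_at_top[OF tendsto_const]
        filterlim_tendsto_pos_mult_at_top[OF tendsto_const] filterlim_ident)
  then have "filterlim (\<lambda>t. a * t + b) at_top at_top"
    by (simp add: add.commute)
  then show ?thesis
    by (rule filterlim_compose[OF tendsto_Qf_at_top])
qed

lemma sum_Qf_affine_strict_decreasing:
  assumes "finite K" "K \<noteq> {}" "\<And>k. k \<in> K \<Longrightarrow> a k > 0" "t < u"
  shows "(\<Sum>k\<in>K. Qf (a k * u + b k)) < (\<Sum>k\<in>K. Qf (a k * t + b k))"
  using assms by (intro sum_strict_mono Qf_strict_decreasing) auto

lemma sum_Qf_affine_unique_root:
  assumes "finite K" "\<And>k. k \<in> K \<Longrightarrow> a k > 0" "0 < e" "e < (\<Sum>k\<in>K. Qf (b k))"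
  shows "\<exists>r\<ge>0. (\<Sum>k\<in>K. Qf (a k * r + b k)) = e
    \<and> (\<forall>t. (\<Sum>k\<in>K. Qf (a k * t + b k)) = e \<longrightarrow> t = r)"
proof -
  define S where "S t = (\<Sum>k\<in>K. Qf (a k * t + b k))" for t
  have "K \<noteq> {}"
    using assms by auto
  then have decreasing: "S u < S t" if "t < u" for t u
    unfolding S_def using assms(1,2) that by (intro sum_Qf_affine_strict_decreasing)
  have "(S \<longlongrightarrow> (\<Sum>k\<in>K. 0)) at_top"
    unfolding S_def using assms by (intro tendsto_sum tendsto_Qf_affine_at_top) auto
  then obtain c where "\<forall>t\<ge>c. S t < e"
    using order_tendstoD(2)[of S 0 at_top e] \<open>0 < e\<close> by (auto simp: eventually_at_top_linorder)
  moreover have "isCont S t" for t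
    unfolding S_def by (intro continuous_intros isCont_o2[OF _ isCont_Qf])
  moreover have "e \<le> S 0"
    using assms by (simp add: S_def)
  ultimately obtain r where "0 \<le> r" "S r = e"
    using IVT2[of S "max c 0" e 0] by (force simp: less_imp_le)
  moreover have "\<forall>t. S t = e \<longrightarrow> t = r"
    using decreasing \<open>S r = e\<close> by (metis less_irrefl linorder_neqE)
  ultimately show ?thesis
    unfolding S_def by blast
qed

lemma Vdisp_pos: "\<rho> > 0 \<Longrightarrow> Vdisp \<rho> > 0"
  unfolding Vdisp_def by (auto intro!: mult_pos_pos divide_pos_pos simp: log_def)

lemma acoef_pos:
  assumes "\<gamma> > 0" "gS i > 0" "gD i > 0" "j \<noteq> N + 1 \<Longrightarrow> gS j > 0"
  shows "acoef N \<gamma> gS gD i j > 0"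
  using assms by (auto simp: acoef_def Vdisp_pos)

lemma acoef_diag: "\<gamma> > 0 \<Longrightarrow> gS i > 0 \<Longrightarrow> i \<noteq> N + 1 \<Longrightarrow> acoef N \<gamma> gS gD i i = 1"
  using Vdisp_pos[of "gS i * \<gamma>"] by (simp add: acoef_def)

lemma bcoef_diag: "i \<noteq> N + 1 \<Longrightarrow> bcoef N n \<gamma> gS gD i i = 0"
  by (simp add: bcoef_def)

lemma ccoef_nonneg: "\<gamma> > 0 \<Longrightarrow> gS i > 0 \<Longrightarrow> ccoef \<gamma> gS i \<ge> 0"
  using Vdisp_pos[of "gS i * \<gamma>"] by (simp add: ccoef_def)

lemma Qf_le_cstr_add:
  assumes "\<gamma> > 0" "i \<in> {1..N}" "gS i > 0"
  shows "Qf (x i) \<le> cstr N n \<gamma> gS gD \<epsilon> x + \<epsilon>"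
proof -
  let ?term = "\<lambda>i j. Qf (acoef N \<gamma> gS gD i j * x i + bcoef N n \<gamma> gS gD i j)"
  have "Qf (x i) = ?term i i"
    using assms by (simp add: acoef_diag bcoef_diag)
  also have "\<dots> \<le> (\<Sum>j=i..N+1. ?term i j)"
    using assms by (intro member_le_sum) (auto simp: Qf_nonneg)
  also have "\<dots> \<le> (\<Sum>i=1..N. \<Sum>j=i..N+1. ?term i j)"
    using assms by (intro member_le_sum[where f="\<lambda>i. \<Sum>j=i..N+1. ?term i j"] sum_nonneg Qf_nonneg) auto
  finally show ?thesis
    by (simp add: cstr_def)
qed

lemma cstr_const:
  "cstr N n \<gamma> gS gD \<epsilon> (\<lambda>_. t) =
    (\<Sum>k\<in>(SIGMA i:{1..N}. {i..N+1}).
      Qf (acoef N \<gamma> gS gD (fst k) (snd k) * t + bcoef N n \<gamma> gS gD (fst k) (snd k))) - \<epsilon>"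
  unfolding cstr_def by (subst sum.Sigma) (auto simp: case_prod_unfold)

lemma Qinv_le_feasible:
  assumes "\<gamma> > 0" "i \<in> {1..N}" "gS i > 0" "0 < \<epsilon>" "\<epsilon> \<le> 1/2"
    and "cstr N n \<gamma> gS gD \<epsilon> x = 0"
  shows "Qinv \<epsilon> \<le> x i"
proof -
  have "Qf (x i) \<le> Qf (Qinv \<epsilon>)"
    using Qf_le_cstr_add[of \<gamma> i N gS x n gD \<epsilon>] assms by (simp add: Qf_Qinv)
  then show ?thesis
    by (simp add: Qf_le_iff)
qed

lemma Qinv_mult_sum_ccoef_le_objective:
  assumes "\<gamma> > 0" "\<And>k. k \<in> {1..N} \<Longrightarrow> gS k > 0" "0 < \<epsilon>" "\<epsilon> \<le> 1/2"
    and "cstr N n \<gamma> gS gD \<epsilon> x = 0"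
  shows "Qinv \<epsilon> * (\<Sum>i=1..N. ccoef \<gamma> gS i) \<le> (\<Sum>i=1..N. ccoef \<gamma> gS i * x i)"
proof -
  have "Qinv \<epsilon> \<le> x i" if "i \<in> {1..N}" for i
    using that assms by (intro Qinv_le_feasible[where x=x and n=n and gD=gD]) auto
  then have "(\<Sum>i=1..N. ccoef \<gamma> gS i * Qinv \<epsilon>) \<le> (\<Sum>i=1..N. ccoef \<gamma> gS i * x i)"
    using assms by (intro sum_mono mult_left_mono) (auto simp: ccoef_nonneg)
  then show ?thesis
    by (simp add: sum_distrib_left mult.commute)
qed

lemma xone_solves_cstr:
  assumes "N \<ge> 1" "\<gamma> > 0" "\<And>k. k \<in> {1..N} \<Longrightarrow> gS k > 0" "\<And>k. k \<in> {1..N} \<Longrightarrow> gD k > 0"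
    and "0 < \<epsilon>" "\<epsilon> < 1/2"
  shows "0 \<le> xone N n \<gamma> gS gD \<epsilon>" "cstr N n \<gamma> gS gD \<epsilon> (\<lambda>_. xone N n \<gamma> gS gD \<epsilon>) = 0"
proof -
  let ?K = "SIGMA i:{1..N}. {i..N+1}"
  define a where "a k = acoef N \<gamma> gS gD (fst k) (snd k)" for k
  define b where "b k = bcoef N n \<gamma> gS gD (fst k) (snd k)" for k
  define S where "S t = (\<Sum>k\<in>?K. Qf (a k * t + b k))" for t
  have cstr_eq: "cstr N n \<gamma> gS gD \<epsilon> (\<lambda>_. t) = S t - \<epsilon>" for t
    unfolding S_def a_def b_def by (rule cstr_const)
  have "\<epsilon> < Qf 0"
    using assms by (simp add: Qf_0)
  also have "\<dots> \<le> cstr N n \<gamma> gS gD \<epsilon> (\<lambda>_. 0) + \<epsilon>"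
    using assms by (intro Qf_le_cstr_add) auto
  finally have above: "\<epsilon> < (\<Sum>k\<in>?K. Qf (b k))"
    by (simp add: cstr_eq S_def)
  have slopes_pos: "a k > 0" if "k \<in> ?K" for k
    using that assms unfolding a_def by (intro acoef_pos) auto
  have "finite ?K"
    by auto
  then have "\<exists>r\<ge>0. S r = \<epsilon> \<and> (\<forall>t. S t = \<epsilon> \<longrightarrow> t = r)"
    unfolding S_def by (rule sum_Qf_affine_unique_root[OF _ slopes_pos \<open>0 < \<epsilon>\<close> above])
  then obtain r where r: "0 \<le> r" "S r = \<epsilon>" and unique: "\<forall>t. S t = \<epsilon> \<longrightarrow> t = r"
    by (elim exE conjE)
  have "xone N n \<gamma> gS gD \<epsilon> = r"
    unfolding xone_def cstr_eq
  proof (rule the_equality)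
    show "S r - \<epsilon> = 0"
      using r by simp
    show "t = r" if "S t - \<epsilon> = 0" for t
      using unique[rule_format, of t] that by simp
  qed
  with r show "0 \<le> xone N n \<gamma> gS gD \<epsilon>" "cstr N n \<gamma> gS gD \<epsilon> (\<lambda>_. xone N n \<gamma> gS gD \<epsilon>) = 0"
    by (simp_all add: cstr_eq)
qed

theorem lemma4:
  fixes N n :: nat and \<gamma> \<epsilon> :: real and gS gD :: "nat \<Rightarrow> real"
  assumes "N \<ge> 1" and "n \<ge> 1" and "\<gamma> > 0"
    and "\<And>k. k \<in> {1..N} \<Longrightarrow> gS k > 0"
    and "\<And>k. k \<in> {1..N} \<Longrightarrow> gD k > 0"
    and "\<And>k l. 1 \<le> k \<Longrightarrow> k \<le> l \<Longrightarrow> l \<le> N \<Longrightarrow> gS k \<le> gS l"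
    and "0 < \<epsilon>" and "\<epsilon> < 1/2"
  shows "Qinv \<epsilon> * (\<Sum>i=1..N. ccoef \<gamma> gS i) \<le> v0 N n \<gamma> gS gD \<epsilon>
       \<and> v0 N n \<gamma> gS gD \<epsilon> \<le> xone N n \<gamma> gS gD \<epsilon> * (\<Sum>i=1..N. ccoef \<gamma> gS i)"
proof -
  define F where "F = {(\<Sum>i=1..N. ccoef \<gamma> gS i * x i) | x.
    cstr N n \<gamma> gS gD \<epsilon> x = 0 \<and> (\<forall>i\<in>{1..N}. x i \<ge> 0)}"
  have lower: "Qinv \<epsilon> * (\<Sum>i=1..N. ccoef \<gamma> gS i) \<le> y" if "y \<in> F" for y
  proof -
    obtain x where "y = (\<Sum>i=1..N. ccoef \<gamma> gS i * x i)" and "cstr N n \<gamma> gS gD \<epsilon> x = 0"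
      using \<open>y \<in> F\<close> unfolding F_def by blast
    with Qinv_mult_sum_ccoef_le_objective[OF assms(3,4,7)] assms(8) show ?thesis
      by simp
  qed
  have feasible: "xone N n \<gamma> gS gD \<epsilon> * (\<Sum>i=1..N. ccoef \<gamma> gS i) \<in> F"
    using xone_solves_cstr[where n=n and gS=gS and gD=gD, OF assms(1,3-5,7-8)] unfolding F_def
    by (intro CollectI exI[of _ "\<lambda>_. xone N n \<gamma> gS gD \<epsilon>"])
      (auto simp: mult.commute[of "xone N n \<gamma> gS gD \<epsilon>"] sum_distrib_right)
  have "Qinv \<epsilon> * (\<Sum>i=1..N. ccoef \<gamma> gS i) \<le> Inf F"
    using feasible lower by (intro cInf_greatest) auto
  moreover have "Inf F \<le> xone N n \<gamma> gS gD \<epsilon> * (\<Sum>i=1..N. ccoef \<gamma> gS i)"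
    by (intro cInf_lower[OF feasible] bdd_belowI[OF lower])
  ultimately show ?thesis
    unfolding v0_def F_def by simp
qed

end
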